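(* Let $(\Gamma,\omega,\Phi)$ be a classical Poincaré-invariant system with timelike future-directed four-momentum $P$, and let $\chi$ be a position observable for it. Then $\chi$ is a centre of spin position observable if and only if, for every $(u,\tau)\in\mathsf{SpHP}$ and every $\gamma\in\Gamma$, $$u^\flat\wedge P^\flat\wedge\big(\iota_{u+\frac{P}{mc}}S(u)\big)=0,$$ where $S(u)_{\mu\nu}=J_{\mu\nu}-\chi_\mu(u,\tau)P_\nu+\chi_\nu(u,\tau)P_\mu$ and $\iota_v S$ denotes the one-form $S(v,\cdot)$.
   Context: Minkowski spacetime: affine space $M$ over a 4-dimensional real vector space $V$ with metric $\eta$ of signature $(-,+,+,+)$, fixed orientation and time orientation, fixed origin identifying $M$ with $V$. $u\cdot v:=\eta(u,v)$, $v^\flat=\eta(v,\cdot)$, indices lowered/raised with $\eta$; $\varepsilon$ is the volume form with $\varepsilon_{0123}=+1$ in positively oriented orthonormal bases; $c>0$. $\mathsf{SpHP}$ is the set of spacelike hyperplanes, each identified with $(u,\tau)$, $u$ future-directed unit timelike normal, $\Sigma=\{x:u\cdot x=-\tau\}$. A classical Poincaré-invariant system has phase-space functions $P_\mu$ (four-momentum) and $J_{\mu\nu}=-J_{\nu\mu}$ (angular momentum about the origin); $m=\sqrt{-P\cdot P}/c$. A position observable is a map $\chi\colon\mathsf{SpHP}\times\Gamma\to M$ with $u_\mu\chi^\mu(u,\tau)=-\tau$ and $\partial\chi_\mu(u,\tau)/\partial\tau=P_\mu/(-u\cdot P)$; its spin tensor is $S(u)_{\mu\nu}=J_{\mu\nu}-\chi_\mu(u,\tau)P_\nu+\chi_\nu(u,\tau)P_\mu$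 (independent of $\tau$). The Pauli–Lubański vector is $W_\mu=-\tfrac12\varepsilon_{\mu\nu\rho\sigma}P^\nu J^{\rho\sigma}$. The spin vector in the frame $u$ is $s(u)=B(u)\,W/(mc)$, where $B(u)$ is the boost $B^\mu{}_\nu(u)=\delta^\mu_\nu+\frac{(P^\mu/(mc)+u^\mu)(P_\nu/(mc)+u_\nu)}{1-u\cdot P/(mc)}-2\frac{u^\mu P_\nu}{mc}$ mapping $P/(mc)$ to $u$. A position observable $\chi$ is a centre of spin if $s_\mu(u)=-\tfrac12\varepsilon_{\mu\nu\rho\sigma}u^\nu S^{\rho\sigma}(u)$ for all $(u,\tau)$ and all phase-space points. *)

theory Defs
  imports "HOL-Analysis.Analysis"
begin

text \<open>Minkowski spacetime in a fixed positively oriented, time-oriented orthonormal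
basis: V = real^4, indices of type 4 (0 = time), eta = diag(-1,1,1,1).
Vectors are stored by their contravariant components v^mu; two-index tensors
J, S by their covariant components T_{mu nu} (T $ mu $ nu).\<close>

definition eta :: "4 \<Rightarrow> real" where
  "eta i = (if i = 0 then -1 else 1)"

definition mdot :: "real^4 \<Rightarrow> real^4 \<Rightarrow> real" where
  "mdot u v = (\<Sum>i\<in>UNIV. eta i * u$i * v$i)"

text \<open>lowering / raising indices (eta is diagonal and its own inverse)\<close>
definition flat :: "real^4 \<Rightarrow> real^4" where
  "flat v = (\<chi> i. eta i * v$i)"

definition raise2 :: "real^4^4 \<Rightarrow> real^4^4" where
  "raise2 T = (\<chi> i j. eta i * eta j * T$i$j)"

definition idx :: "4 \<Rightarrow> int" where
  "idx i = (if i = 0 then 0 else if i = 1 then 1 else if i = 2 then 2 else 3)"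

text \<open>Levi-Civita symbol, eps 0 1 2 3 = 1\<close>
definition eps :: "4 \<Rightarrow> 4 \<Rightarrow> 4 \<Rightarrow> 4 \<Rightarrow> real" where
  "eps a b c d = real_of_int
     (sgn (idx b - idx a) * sgn (idx c - idx a) * sgn (idx d - idx a) *
      sgn (idx c - idx b) * sgn (idx d - idx b) * sgn (idx d - idx c))"

definition future_timelike :: "real^4 \<Rightarrow> bool" where
  "future_timelike v \<longleftrightarrow> mdot v v < 0 \<and> v$0 > 0"

definition SpHP :: "((real^4) \<times> real) set" where
  "SpHP = {(u,\<tau>). mdot u u = -1 \<and> u$0 > 0}"

definition mass :: "real \<Rightarrow> real^4 \<Rightarrow> real" where
  "mass c p = sqrt (- mdot p p) / c"

definition PL :: "real^4 \<Rightarrow> real^4^4 \<Rightarrow> real^4" where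
  "PL p J = (\<chi> \<mu>. - (1/2) * (\<Sum>\<nu>\<in>UNIV. \<Sum>\<rho>\<in>UNIV. \<Sum>\<sigma>\<in>UNIV.
       eps \<mu> \<nu> \<rho> \<sigma> * p$\<nu> * (raise2 J)$\<rho>$\<sigma>))"

text \<open>boost B(u)^mu_nu mapping P/(mc) to u\<close>
definition boost :: "real \<Rightarrow> real^4 \<Rightarrow> real^4 \<Rightarrow> real^4^4" where
  "boost c p u = (let mc = mass c p * c in
     (\<chi> \<mu> \<nu>. (if \<mu> = \<nu> then 1 else 0)
       + (p$\<mu>/mc + u$\<mu>) * ((flat p)$\<nu>/mc + (flat u)$\<nu>) / (1 - mdot u p / mc)
       - 2 * u$\<mu> * (flat p)$\<nu> / mc))"

text \<open>spin vector s(u) = B(u) W / (mc), contravariant components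
  (W^nu obtained by raising the index of the covector W_nu)\<close>
definition spin_vec :: "real \<Rightarrow> real^4 \<Rightarrow> real^4^4 \<Rightarrow> real^4 \<Rightarrow> real^4" where
  "spin_vec c p J u = (\<chi> \<mu>. (\<Sum>\<nu>\<in>UNIV. (boost c p u)$\<mu>$\<nu> * (flat (PL p J))$\<nu>)
                             / (mass c p * c))"

definition spin_tensor :: "real^4^4 \<Rightarrow> real^4 \<Rightarrow> real^4 \<Rightarrow> real^4^4" where
  "spin_tensor J p x = (\<chi> \<mu> \<nu>. J$\<mu>$\<nu> - (flat x)$\<mu> * (flat p)$\<nu> + (flat x)$\<nu> * (flat p)$\<mu>)"

text \<open>Position observable: chi u tau g is the point of the hyperplane (u,tau) for the
phase-space point g.\<close>
definition position_observable ::
  "('g \<Rightarrow> real^4) \<Rightarrow> (real^4 \<Rightarrow> real \<Rightarrow> 'g \<Rightarrow> real^4) \<Rightarrow> bool" where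
  "position_observable P \<chi>' \<longleftrightarrow>
     (\<forall>u \<tau> g. (u,\<tau>) \<in> SpHP \<longrightarrow>
        mdot u (\<chi>' u \<tau> g) = - \<tau> \<and>
        ((\<lambda>t. \<chi>' u t g) has_vector_derivative ((1 / (- mdot u (P g))) *\<^sub>R P g)) (at \<tau>))"

definition centre_of_spin ::
  "real \<Rightarrow> ('g \<Rightarrow> real^4) \<Rightarrow> ('g \<Rightarrow> real^4^4) \<Rightarrow> (real^4 \<Rightarrow> real \<Rightarrow> 'g \<Rightarrow> real^4) \<Rightarrow> bool" where
  "centre_of_spin c P J \<chi>' \<longleftrightarrow>
     (\<forall>u \<tau> g. (u,\<tau>) \<in> SpHP \<longrightarrow>
        (\<forall>\<mu>. (flat (spin_vec c (P g) (J g) u))$\<mu> =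
           - (1/2) * (\<Sum>\<nu>\<in>UNIV. \<Sum>\<rho>\<in>UNIV. \<Sum>\<sigma>\<in>UNIV.
               eps \<mu> \<nu> \<rho> \<sigma> * u$\<nu> *
               (raise2 (spin_tensor (J g) (P g) (\<chi>' u \<tau> g)))$\<rho>$\<sigma>)))"

definition iota_contr :: "real^4 \<Rightarrow> real^4^4 \<Rightarrow> real^4" where
  "iota_contr v S = (\<chi> \<nu>. \<Sum>\<mu>\<in>UNIV. v$\<mu> * S$\<mu>$\<nu>)"

definition wedge3 :: "real^4 \<Rightarrow> real^4 \<Rightarrow> real^4 \<Rightarrow> 4 \<Rightarrow> 4 \<Rightarrow> 4 \<Rightarrow> real" where
  "wedge3 a b c i j k =
     a$i*b$j*c$k - a$i*b$k*c$j + a$j*b$k*c$i - a$j*b$i*c$k + a$k*b$i*c$j - a$k*b$j*c$i"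

end

theory Submission
  imports Defs
begin

(* For an antisymmetric S, the three-form u\<flat> \<and> w\<flat> \<and> \<iota>\<^sub>v S in four dimensions is
   determined by its Hodge dual, which equals
     (u\<cdot>v) \<star>(w\<flat> \<and> S) - (w\<cdot>v) \<star>(u\<flat> \<and> S) - \<langle>u, \<star>(w\<flat> \<and> S)\<rangle> v\<flat>.
   Take w = P, v = u + P/(mc) and S = S(u). The position-dependent part of S(u) drops out of
   \<star>(P\<flat> \<and> S(u)), which is therefore the Pauli-Lubanski vector W, and writing out the boost
   shows that the dual equals (mc - u\<cdot>P) (\<star>(u\<flat> \<and> S(u)) - s(u)\<flat>). Since u and P are both
   future timelike, u\<cdot>P < 0, so the three-form vanishes exactly when
   s(u)\<flat> = \<star>(u\<flat> \<and> S(u)), which is the centre-of-spin condition. *)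

lemma exhaust_4_zero: "(i::4) = 0 \<or> i = 1 \<or> i = 2 \<or> i = 3"
  using exhaust_4[of i] by auto

lemma UNIV_4: "(UNIV :: 4 set) = {0, 1, 2, 3}"
  using exhaust_4_zero by auto

lemma sum_UNIV_4: "sum f (UNIV :: 4 set) = f 0 + f 1 + f 2 + f 3"
  unfolding UNIV_4 by (simp add: ac_simps)

lemma all_4: "(\<forall>i::4. Q i) \<longleftrightarrow> Q 0 \<and> Q 1 \<and> Q 2 \<and> Q 3"
  by (metis exhaust_4_zero)

lemma idx_simps [simp]: "idx 0 = 0" "idx 1 = 1" "idx 2 = 2" "idx 3 = 3"
  by (simp_all add: idx_def)

lemma eta_simps [simp]: "eta 0 = -1" "eta 1 = 1" "eta 2 = 1" "eta 3 = 1"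
  by (simp_all add: eta_def)

lemma wedge3_repeated_index:
  "wedge3 a b c i i k = 0" "wedge3 a b c i j i = 0" "wedge3 a b c i j j = 0"
  by (simp_all add: wedge3_def)

(* The guards make these usable as simp rules: simp cannot compare elements of type 4,
   but it evaluates idx, so it sorts index triples into increasing order. *)
lemma wedge3_swap:
  "idx j < idx i \<Longrightarrow> wedge3 a b c i j k = - wedge3 a b c j i k"
  "idx k < idx j \<Longrightarrow> wedge3 a b c i j k = - wedge3 a b c i k j"
  by (simp_all add: wedge3_def algebra_simps)

lemma wedge3_eq_0_iff:
  "(\<forall>i j k. wedge3 a b c i j k = 0) \<longleftrightarrow>
   wedge3 a b c 1 2 3 = 0 \<and> wedge3 a b c 0 2 3 = 0 \<and> wedge3 a b c 0 1 3 = 0 \<and> wedge3 a b c 0 1 2 = 0"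
  by (simp add: all_4 wedge3_swap wedge3_repeated_index) blast

lemma antisym_components:
  fixes S :: "real^4^4"
  assumes "\<And>\<mu> \<nu>. S $ \<mu> $ \<nu> = - S $ \<nu> $ \<mu>"
  shows "S$1$0 = - S$0$1" "S$2$0 = - S$0$2" "S$3$0 = - S$0$3"
    "S$2$1 = - S$1$2" "S$3$1 = - S$1$3" "S$3$2 = - S$2$3"
    "S$0$0 = 0" "S$1$1 = 0" "S$2$2 = 0" "S$3$3 = 0"
  by (rule assms | metis assms neg_equal_zero)+

(* PL v S is the Hodge dual \<star>(v\<flat> \<and> S); in particular the centre-of-spin condition says
   flat s(u) = PL u S(u). *)
lemma PL_components:
  fixes S :: "real^4^4"
  assumes "\<And>\<mu> \<nu>. S $ \<mu> $ \<nu> = - S $ \<nu> $ \<mu>"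
  shows "PL v S $ 0 = - v$1 * S$2$3 + v$2 * S$1$3 - v$3 * S$1$2"
    and "PL v S $ 1 = v$0 * S$2$3 + v$2 * S$0$3 - v$3 * S$0$2"
    and "PL v S $ 2 = - v$0 * S$1$3 - v$1 * S$0$3 + v$3 * S$0$1"
    and "PL v S $ 3 = v$0 * S$1$2 + v$1 * S$0$2 - v$2 * S$0$1"
  by (simp_all add: raise2_def PL_def sum_UNIV_4 eps_def antisym_components[OF assms] field_simps)

lemma inner_PL_self:
  assumes "\<And>\<mu> \<nu>. S $ \<mu> $ \<nu> = - S $ \<nu> $ \<mu>"
  shows "v \<bullet> PL v S = 0"
  by (simp add: inner_vec_def sum_UNIV_4 PL_components[OF assms] algebra_simps)

lemma spin_tensor_antisym:
  assumes "\<And>\<mu> \<nu>. J $ \<mu> $ \<nu> = - J $ \<nu> $ \<mu>"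
  shows "spin_tensor J p x $ \<mu> $ \<nu> = - spin_tensor J p x $ \<nu> $ \<mu>"
  using assms[of \<mu> \<nu>] by (simp add: spin_tensor_def)

lemma PL_spin_tensor:
  assumes "\<And>\<mu> \<nu>. J $ \<mu> $ \<nu> = - J $ \<nu> $ \<mu>"
  shows "PL p (spin_tensor J p x) = PL p J"
  by (simp add: vec_eq_iff all_4 PL_components[OF assms]
      PL_components[OF spin_tensor_antisym[OF assms]])
     (simp add: spin_tensor_def flat_def algebra_simps)

(* Up to a sign in each component, the Hodge dual of u\<flat> \<and> w\<flat> \<and> \<iota>\<^sub>v S; the formula
   comes from contracting the four-form u\<flat> \<and> w\<flat> \<and> S with v. *)
definition dual_wedge_iota :: "real^4 \<Rightarrow> real^4 \<Rightarrow> real^4 \<Rightarrow> real^4^4 \<Rightarrow> real^4" where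
  "dual_wedge_iota u w v S =
     mdot u v *\<^sub>R PL w S - mdot w v *\<^sub>R PL u S - (u \<bullet> PL w S) *\<^sub>R flat v"

lemma wedge3_iota_contr_components:
  fixes S :: "real^4^4"
  assumes "\<And>\<mu> \<nu>. S $ \<mu> $ \<nu> = - S $ \<nu> $ \<mu>"
  shows "wedge3 (flat u) (flat w) (iota_contr v S) 1 2 3 = dual_wedge_iota u w v S $ 0"
    and "wedge3 (flat u) (flat w) (iota_contr v S) 0 2 3 = dual_wedge_iota u w v S $ 1"
    and "wedge3 (flat u) (flat w) (iota_contr v S) 0 1 3 = - dual_wedge_iota u w v S $ 2"
    and "wedge3 (flat u) (flat w) (iota_contr v S) 0 1 2 = dual_wedge_iota u w v S $ 3"
  by (simp_all add: dual_wedge_iota_def wedge3_def iota_contr_def flat_def mdot_def inner_vec_def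
      sum_UNIV_4 PL_components[OF assms] antisym_components[OF assms]; algebra)+

lemma wedge3_iota_contr_eq_0_iff:
  fixes S :: "real^4^4"
  assumes "\<And>\<mu> \<nu>. S $ \<mu> $ \<nu> = - S $ \<nu> $ \<mu>"
  shows "(\<forall>i j k. wedge3 (flat u) (flat w) (iota_contr v S) i j k = 0) \<longleftrightarrow>
    dual_wedge_iota u w v S = 0"
  unfolding wedge3_eq_0_iff wedge3_iota_contr_components[OF assms]
  by (simp add: vec_eq_iff all_4)

lemma flat_flat [simp]: "flat (flat v) = v"
  by (simp add: flat_def vec_eq_iff eta_def)

lemma flat_add: "flat (v + w) = flat v + flat w"
  by (simp add: flat_def vec_eq_iff algebra_simps)

lemma flat_scaleR: "flat (t *\<^sub>R v) = t *\<^sub>R flat v"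
  by (simp add: flat_def vec_eq_iff)

lemma inner_flat_flat: "flat v \<bullet> flat w = v \<bullet> w"
  by (simp add: inner_vec_def flat_def sum_UNIV_4)

lemma mdot_commute: "mdot u v = mdot v u"
  by (simp add: mdot_def mult.commute mult.left_commute)

lemma mdot_add_right: "mdot u (v + w) = mdot u v + mdot u w"
  by (simp add: mdot_def sum.distrib algebra_simps)

lemma mdot_scaleR_right: "mdot u (t *\<^sub>R v) = t * mdot u v"
  by (simp add: mdot_def sum_distrib_left algebra_simps)

lemma mdot_future_timelike_neg:
  assumes "future_timelike u" and "future_timelike p"
  shows "mdot u p < 0"
proof -
  define a where "a = u$1 * p$1 + u$2 * p$2 + u$3 * p$3"
  define nu where "nu = (u$1)\<^sup>2 + (u$2)\<^sup>2 + (u$3)\<^sup>2"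
  define np where "np = (p$1)\<^sup>2 + (p$2)\<^sup>2 + (p$3)\<^sup>2"
  have nu: "nu < (u$0)\<^sup>2" and np: "np < (p$0)\<^sup>2" and "u$0 > 0" "p$0 > 0"
    using assms
    by (simp_all add: future_timelike_def mdot_def sum_UNIV_4 nu_def np_def power2_eq_square)
  have "nu * np - a\<^sup>2 =
      (u$1 * p$2 - u$2 * p$1)\<^sup>2 + (u$1 * p$3 - u$3 * p$1)\<^sup>2 + (u$2 * p$3 - u$3 * p$2)\<^sup>2"
    unfolding a_def nu_def np_def by algebra
  then have "a\<^sup>2 \<le> nu * np"
    by (smt (verit) zero_le_power2)
  also have "\<dots> < (u$0 * p$0)\<^sup>2"
    using nu np by (simp add: power_mult_distrib mult_strict_mono' nu_def np_def)
  finally have "a < u$0 * p$0"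
    using \<open>u$0 > 0\<close> \<open>p$0 > 0\<close> by (smt (verit) power2_less_imp_less mult_pos_pos)
  moreover have "mdot u p = - (u$0 * p$0) + a"
    by (simp add: mdot_def sum_UNIV_4 a_def)
  ultimately show ?thesis
    by simp
qed

lemma boost_mult:
  assumes M: "mass c p * c = M"
  shows "boost c p u *v x = x
    + ((flat ((1/M) *\<^sub>R p + u) \<bullet> x) / (1 - mdot u p / M)) *\<^sub>R ((1/M) *\<^sub>R p + u)
    - (2 * (flat p \<bullet> x) / M) *\<^sub>R u"
  unfolding boost_def Let_def M vec_eq_iff all_4
  by (simp add: matrix_vector_mult_def inner_vec_def sum_UNIV_4 flat_def divide_inverse; algebra)

lemma boost_mult_flat:
  assumes M: "mass c p * c = M" and "M \<noteq> 0" and "M - mdot u p \<noteq> 0"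
    and pW: "p \<bullet> W = 0"
  shows "boost c p u *v flat W = flat W + ((u \<bullet> W) / (M - mdot u p)) *\<^sub>R (p + M *\<^sub>R u)"
proof -
  have "flat ((1/M) *\<^sub>R p + u) \<bullet> flat W = u \<bullet> W" and "flat p \<bullet> flat W = 0"
    by (simp_all add: inner_flat_flat inner_add_left pW)
  moreover have "1 - mdot u p / M = (M - mdot u p) / M"
    using \<open>M \<noteq> 0\<close> by (simp add: field_simps)
  ultimately show ?thesis
    using assms by (simp add: boost_mult[OF M] scaleR_add_right)
qed

lemma flat_spin_vec:
  assumes M: "mass c p * c = M" and "M \<noteq> 0" and "M - mdot u p \<noteq> 0"
    and J: "\<And>\<mu> \<nu>. J $ \<mu> $ \<nu> = - J $ \<nu> $ \<mu>"
  shows "flat (spin_vec c p J u) =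
    (1/M) *\<^sub>R (PL p J + ((u \<bullet> PL p J) / (M - mdot u p)) *\<^sub>R (flat p + M *\<^sub>R flat u))"
proof -
  have "spin_vec c p J u = (1/M) *\<^sub>R (boost c p u *v flat (PL p J))"
    by (simp add: spin_vec_def matrix_vector_mult_def vec_eq_iff M)
  then show ?thesis
    using assms(1-3) by (simp add: boost_mult_flat inner_PL_self[OF J] flat_add flat_scaleR)
qed

lemma dual_wedge_iota_spin_frame:
  assumes "mdot u u = -1" and "mdot p p = - M\<^sup>2" and "M \<noteq> 0"
  shows "dual_wedge_iota u p (u + (1/M) *\<^sub>R p) S =
    (M - mdot u p) *\<^sub>R PL u S - ((M - mdot u p) / M) *\<^sub>R PL p S
    - ((u \<bullet> PL p S) / M) *\<^sub>R (flat p + M *\<^sub>R flat u)"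
proof -
  have uv: "mdot u (u + (1/M) *\<^sub>R p) = mdot u p / M - 1"
    and pv: "mdot p (u + (1/M) *\<^sub>R p) = mdot u p - M"
    using assms by (simp_all add: mdot_add_right mdot_scaleR_right mdot_commute[of p u]
        power2_eq_square)
  show ?thesis
    unfolding dual_wedge_iota_def uv pv
    using assms(3) by (simp add: flat_add flat_scaleR vec_eq_iff field_simps)
qed

lemma centre_of_spin_condition_iff:
  assumes "c > 0" and J: "\<And>\<mu> \<nu>. J $ \<mu> $ \<nu> = - J $ \<nu> $ \<mu>"
    and "future_timelike p" and "mdot u u = -1" and "u$0 > 0"
  shows "flat (spin_vec c p J u) = PL u (spin_tensor J p x) \<longleftrightarrow>
    (\<forall>i j k. wedge3 (flat u) (flat p)
       (iota_contr (u + (1 / (mass c p * c)) *\<^sub>R p) (spin_tensor J p x)) i j k = 0)"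
proof -
  define M where "M = mass c p * c"
  define S where "S = spin_tensor J p x"
  define d where "d = M - mdot u p"
  have "mdot p p < 0"
    using \<open>future_timelike p\<close> by (simp add: future_timelike_def)
  then have "M > 0" and pp: "mdot p p = - M\<^sup>2"
    using \<open>c > 0\<close> by (simp_all add: M_def mass_def)
  moreover have "mdot u p < 0"
    using assms(3-5) by (simp add: mdot_future_timelike_neg future_timelike_def)
  ultimately have "d > 0"
    by (simp add: d_def)
  have "flat (spin_vec c p J u) =
      (1/M) *\<^sub>R (PL p S + ((u \<bullet> PL p S) / d) *\<^sub>R (flat p + M *\<^sub>R flat u))"
    using \<open>M > 0\<close> \<open>d > 0\<close>
    by (simp add: flat_spin_vec[OF M_def[symmetric] _ _ J] PL_spin_tensor[OF J] S_def d_def)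
  then have spin: "d *\<^sub>R flat (spin_vec c p J u) =
      (d / M) *\<^sub>R PL p S + ((u \<bullet> PL p S) / M) *\<^sub>R (flat p + M *\<^sub>R flat u)"
    using \<open>d > 0\<close> by (simp add: scaleR_add_right)
  have "(\<forall>i j k. wedge3 (flat u) (flat p) (iota_contr (u + (1/M) *\<^sub>R p) S) i j k = 0) \<longleftrightarrow>
      dual_wedge_iota u p (u + (1/M) *\<^sub>R p) S = 0"
    unfolding S_def by (rule wedge3_iota_contr_eq_0_iff[OF spin_tensor_antisym[OF J]])
  also have "dual_wedge_iota u p (u + (1/M) *\<^sub>R p) S = d *\<^sub>R (PL u S - flat (spin_vec c p J u))"
    using dual_wedge_iota_spin_frame[OF \<open>mdot u u = -1\<close> pp] \<open>M > 0\<close> spin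
    by (simp add: scaleR_diff_right d_def)
  also have "\<dots> = 0 \<longleftrightarrow> flat (spin_vec c p J u) = PL u S"
    using \<open>d > 0\<close> by auto
  finally show ?thesis
    by (simp add: M_def S_def)
qed

theorem mainTheorem2:
  fixes c :: real
    and P :: "'g \<Rightarrow> real^4"
    and J :: "'g \<Rightarrow> real^4^4"
    and \<chi>' :: "real^4 \<Rightarrow> real \<Rightarrow> 'g \<Rightarrow> real^4"
  assumes c_pos: "c > 0"
    and J_antisym: "\<And>g \<mu> \<nu>. J g $ \<mu> $ \<nu> = - (J g $ \<nu> $ \<mu>)"
    and P_ft: "\<And>g. future_timelike (P g)"
    and pos: "position_observable P \<chi>'"
  shows "centre_of_spin c P J \<chi>' \<longleftrightarrow>
    (\<forall>u \<tau> g. (u,\<tau>) \<in> SpHP \<longrightarrow>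
       (\<forall>i j k. wedge3 (flat u) (flat (P g))
          (iota_contr (u + (1 / (mass c (P g) * c)) *\<^sub>R P g)
                    (spin_tensor (J g) (P g) (\<chi>' u \<tau> g))) i j k = 0))"
proof -
  have "centre_of_spin c P J \<chi>' \<longleftrightarrow> (\<forall>u \<tau> g. (u,\<tau>) \<in> SpHP \<longrightarrow>
      flat (spin_vec c (P g) (J g) u) = PL u (spin_tensor (J g) (P g) (\<chi>' u \<tau> g)))"
    by (simp add: centre_of_spin_def PL_def vec_eq_iff)
  then show ?thesis
    using centre_of_spin_condition_iff[OF c_pos J_antisym P_ft] by (simp add: SpHP_def)
qed

end
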